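(* Let $M\ge1$, let $(\tau^\prime,R)$ be an $M$-layer medium, let $\mathsf{p}\in\mathsf{S}_M^\prime$ be a transmission scattering sequence, and set $(k,m)=(\kappa^\prime(\mathsf{p}),\beta^\prime(\mathsf{p}))$. Then \[ w(\mathsf{p})=(-R)^{\tilde{k}-m}R^{k-m}T^{2m+\mathbb{1}}. \]
   Context: Fix depths $z_{-1}<z_0<\cdots<z_M<z_{M+1}$ and reals $R=(R_0,\ldots,R_M)$ with $-1<R_n<1$ (the travel times $\tau^\prime$ play no role); $T_n=\sqrt{1-R_n^2}$, $T=(T_0,\ldots,T_M)$. A transmission scattering sequence is a finite sequence $\mathsf{p}=(\mathsf{p}_0,\ldots,\mathsf{p}_L)$ with $\mathsf{p}_0=z_{-1}$, $\mathsf{p}_L=z_{M+1}$, $\mathsf{p}_i\in\{z_0,\ldots,z_M\}$ for $1\le i\le L-1$, and for every $0\le i\le L-1$ there is $-1\le j\le M$ with $\{\mathsf{p}_i,\mathsf{p}_{i+1}\}=\{z_j,z_{j+1}\}$; $\mathsf{S}_M^\prime$ is the set of these. Its weight is $w(\mathsf{p})=\prod_{i=1}^{L-1}w_i$ where, if $\mathsf{p}_i=z_j$: $w_i=R_j$ if $\mathsf{p}_{i-1}=\mathsf{p}_{i+1}=z_{j-1}$; $w_i=-R_j$ if $\mathsf{p}_{i-1}=\mathsf{p}_{i+1}=z_{j+1}$; $w_i=T_j$ otherwise. For $0\le n\le M$, consider the maximal runs of consecutive indices $i$ with $\mathsf{p}_i\in\{z_n,\ldots,z_{M+1}\}$; the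 last one (containing index $L$) is the trunk run. $k_n$ is the number of non-trunk runs and $m_n$ the number of non-trunk runs of length at least 2; $\kappa^\prime(\mathsf{p})=(k_0,\ldots,k_M)$, $\beta^\prime(\mathsf{p})=(m_0,\ldots,m_M)$. Notation: $\tilde{k}=(k_1,\ldots,k_M,0)$; $\mathbb{1}=(1,\ldots,1)$; vector arithmetic entrywise; $s^d=\prod_{n=0}^M s_n^{d_n}$ with $0^0=1$. *)

theory Defs
  imports Complex_Main
begin

text \<open>A scattering sequence p = (p_0,...,p_L) is a list of depths of length L+1.\<close>

definition depths_ok :: "nat \<Rightarrow> (int \<Rightarrow> real) \<Rightarrow> bool" where
  "depths_ok M z \<longleftrightarrow> (\<forall>i j. -1 \<le> i \<longrightarrow> i < j \<longrightarrow> j \<le> int M + 1 \<longrightarrow> z i < z j)"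

definition medium :: "nat \<Rightarrow> (nat \<Rightarrow> real) \<Rightarrow> bool" where
  "medium M R \<longleftrightarrow> (\<forall>n\<le>M. -1 < R n \<and> R n < 1)"

definition trans_coeff :: "(nat \<Rightarrow> real) \<Rightarrow> nat \<Rightarrow> real" where
  "trans_coeff R n = sqrt (1 - (R n)\<^sup>2)"

definition tss :: "nat \<Rightarrow> (int \<Rightarrow> real) \<Rightarrow> real list \<Rightarrow> bool" where
  "tss M z p \<longleftrightarrow> p \<noteq> [] \<and>
     p ! 0 = z (-1) \<and> p ! (length p - 1) = z (int M + 1) \<and>
     (\<forall>i. 1 \<le> i \<and> i < length p - 1 \<longrightarrow> (\<exists>j. 0 \<le> j \<and> j \<le> int M \<and> p ! i = z j)) \<and>
     (\<forall>i < length p - 1. \<exists>j. -1 \<le> j \<and> j \<le> int M \<and>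
         {p ! i, p ! (i + 1)} = {z j, z (j + 1)})"

definition depth_index :: "nat \<Rightarrow> (int \<Rightarrow> real) \<Rightarrow> real \<Rightarrow> int" where
  "depth_index M z x = (THE j. -1 \<le> j \<and> j \<le> int M + 1 \<and> z j = x)"

definition loc_weight :: "nat \<Rightarrow> (int \<Rightarrow> real) \<Rightarrow> (nat \<Rightarrow> real) \<Rightarrow> real list \<Rightarrow> nat \<Rightarrow> real" where
  "loc_weight M z R p i =
     (let j = depth_index M z (p ! i) in
      if p ! (i - 1) = z (j - 1) \<and> p ! (i + 1) = z (j - 1) then R (nat j)
      else if p ! (i - 1) = z (j + 1) \<and> p ! (i + 1) = z (j + 1) then - R (nat j)
      else trans_coeff R (nat j))"

definition weight :: "nat \<Rightarrow> (int \<Rightarrow> real) \<Rightarrow> (nat \<Rightarrow> real) \<Rightarrow> real list \<Rightarrow> real" where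
  "weight M z R p = (\<Prod>i\<in>{1..<length p - 1}. loc_weight M z R p i)"

definition in_layer :: "nat \<Rightarrow> (int \<Rightarrow> real) \<Rightarrow> real list \<Rightarrow> nat \<Rightarrow> nat \<Rightarrow> bool" where
  "in_layer M z p n i \<longleftrightarrow> (\<exists>j. int n \<le> j \<and> j \<le> int M + 1 \<and> p ! i = z j)"

definition runs :: "nat \<Rightarrow> (int \<Rightarrow> real) \<Rightarrow> real list \<Rightarrow> nat \<Rightarrow> (nat \<times> nat) set" where
  "runs M z p n = {(a, b). a \<le> b \<and> b \<le> length p - 1 \<and>
      (\<forall>i\<in>{a..b}. in_layer M z p n i) \<and>
      (a = 0 \<or> \<not> in_layer M z p n (a - 1)) \<and>
      (b = length p - 1 \<or> \<not> in_layer M z p n (b + 1))}"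

definition kappa :: "nat \<Rightarrow> (int \<Rightarrow> real) \<Rightarrow> real list \<Rightarrow> nat \<Rightarrow> nat" where
  "kappa M z p n = card {(a, b) \<in> runs M z p n. b \<noteq> length p - 1}"

definition beta :: "nat \<Rightarrow> (int \<Rightarrow> real) \<Rightarrow> real list \<Rightarrow> nat \<Rightarrow> nat" where
  "beta M z p n = card {(a, b) \<in> runs M z p n. b \<noteq> length p - 1 \<and> a < b}"

definition kappa_tilde :: "nat \<Rightarrow> (int \<Rightarrow> real) \<Rightarrow> real list \<Rightarrow> nat \<Rightarrow> nat" where
  "kappa_tilde M z p n = (if n < M then kappa M z p (n + 1) else 0)"

end

theory Submission
  imports Defs
begin

text \<open>Read the sequence as a walk \<open>q\<close> on layer indices from \<open>-1\<close> to \<open>M + 1\<close> with steps \<open>\<pm>1\<close>.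
  A visit of level \<open>n\<close> is weighted \<open>R\<^sub>n\<close>, \<open>-R\<^sub>n\<close> or \<open>T\<^sub>n\<close> according as the walk bounces back
  below, bounces back above, or passes through. A non-trunk run of the region \<open>q \<ge> n\<close> ends with a
  down-step from \<open>n\<close>, and it has length at least two exactly when the walk arrived at that point
  from \<open>n + 1\<close>, i.e. passed down through \<open>n\<close>. Counting arrivals and departures at \<open>n\<close> then gives
  \<open>k\<^sub>n - m\<^sub>n\<close> bounces below, \<open>k\<^sub>n\<^sub>+\<^sub>1 - m\<^sub>n\<close> bounces above, and \<open>2 m\<^sub>n + 1\<close> passes, since the
  walk crosses each edge upwards once more than downwards.\<close>

definition maximal_runs :: "nat \<Rightarrow> (nat \<Rightarrow> bool) \<Rightarrow> (nat \<times> nat) set" where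
  "maximal_runs L P = {(a, b). a \<le> b \<and> b \<le> L \<and> (\<forall>i\<in>{a..b}. P i) \<and>
      (a = 0 \<or> \<not> P (a - 1)) \<and> (b = L \<or> \<not> P (b + 1))}"

lemma maximal_runs_cong:
  assumes "\<And>i. i \<le> L \<Longrightarrow> P i = P' i"
  shows "maximal_runs L P = maximal_runs L P'"
  unfolding maximal_runs_def using assms
  by (intro set_eqI) (auto simp: Suc_le_eq intro!: conj_cong)

lemma inj_on_snd_maximal_runs: "inj_on snd (maximal_runs L P)"
proof (rule inj_onI, clarsimp)
  fix a a' b
  assume runs: "(a, b) \<in> maximal_runs L P" "(a', b) \<in> maximal_runs L P"
  have "\<not> a < a'" if "(a, b) \<in> maximal_runs L P" "(a', b) \<in> maximal_runs L P" for a a'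
  proof
    assume "a < a'"
    then have "a' - 1 \<in> {a..b}" "a' \<noteq> 0" using that by (auto simp: maximal_runs_def)
    then show False using that by (auto simp: maximal_runs_def)
  qed
  then show "a = a'" using runs by (meson linorder_neqE_nat)
qed

definition vertex_weight :: "(nat \<Rightarrow> int) \<Rightarrow> (nat \<Rightarrow> real) \<Rightarrow> (nat \<Rightarrow> real) \<Rightarrow> nat \<Rightarrow> real" where
  "vertex_weight q R T i =
     (if q (i - 1) = q i - 1 \<and> q (Suc i) = q i - 1 then R (nat (q i))
      else if q (i - 1) = q i + 1 \<and> q (Suc i) = q i + 1 then - R (nat (q i))
      else T (nat (q i)))"

locale unit_step_walk =
  fixes q :: "nat \<Rightarrow> int" and L :: nat
  assumes unit_step: "i < L \<Longrightarrow> q (Suc i) = q i + 1 \<or> q (Suc i) = q i - 1"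
begin

definition up_steps :: "int \<Rightarrow> nat \<Rightarrow> nat set" where
  "up_steps n t = {i. i < t \<and> q i = n - 1 \<and> q (Suc i) = n}"

definition down_steps :: "int \<Rightarrow> nat \<Rightarrow> nat set" where
  "down_steps n t = {i. i < t \<and> q i = n \<and> q (Suc i) = n - 1}"

lemma card_up_steps:
  assumes "t \<le> L"
  shows "int (card (up_steps n t)) + of_bool (n \<le> q 0) =
         int (card (down_steps n t)) + of_bool (n \<le> q t)"
  using assms
proof (induction t)
  case 0
  then show ?case by (simp add: up_steps_def down_steps_def)
next
  case (Suc t)
  have up: "up_steps n (Suc t) =
      (if q t = n - 1 \<and> q (Suc t) = n then insert t (up_steps n t) else up_steps n t)"
    by (auto simp: up_steps_def less_Suc_eq)
  have down: "down_steps n (Suc t) =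
      (if q t = n \<and> q (Suc t) = n - 1 then insert t (down_steps n t) else down_steps n t)"
    by (auto simp: down_steps_def less_Suc_eq)
  have "finite (up_steps n t)" "finite (down_steps n t)" "t \<notin> up_steps n t" "t \<notin> down_steps n t"
    by (auto simp: up_steps_def down_steps_def)
  then show ?case
    unfolding up down using Suc unit_step[of t] by (auto split: if_splits)
qed

definition visits :: "int \<Rightarrow> nat set" where
  "visits n = {i. 0 < i \<and> i < L \<and> q i = n}"

definition bounces_below :: "int \<Rightarrow> nat set" where
  "bounces_below n = {i \<in> visits n. q (i - 1) = n - 1 \<and> q (Suc i) = n - 1}"

definition bounces_above :: "int \<Rightarrow> nat set" where
  "bounces_above n = {i \<in> visits n. q (i - 1) = n + 1 \<and> q (Suc i) = n + 1}"

definition passes_up :: "int \<Rightarrow> nat set" where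
  "passes_up n = {i \<in> visits n. q (i - 1) = n - 1 \<and> q (Suc i) = n + 1}"

definition passes_down :: "int \<Rightarrow> nat set" where
  "passes_down n = {i \<in> visits n. q (i - 1) = n + 1 \<and> q (Suc i) = n - 1}"

lemma finite_visit_classes [simp]:
  "finite (visits n)" "finite (bounces_below n)" "finite (bounces_above n)"
  "finite (passes_up n)" "finite (passes_down n)"
  by (auto simp: visits_def bounces_below_def bounces_above_def passes_up_def passes_down_def)

lemma visit_neighbours:
  assumes "i \<in> visits n"
  shows "(q (i - 1) = n - 1 \<or> q (i - 1) = n + 1) \<and> (q (Suc i) = n - 1 \<or> q (Suc i) = n + 1)"
proof -
  have i: "0 < i" "i < L" "q i = n" using assms by (auto simp: visits_def)
  then have "q i = q (i - 1) + 1 \<or> q i = q (i - 1) - 1" using unit_step[of "i - 1"] by simp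
  then show ?thesis using unit_step[of i] i by auto
qed

lemma card_visits_from_below:
  "card {i \<in> visits n. q (i - 1) = n - 1} = card (bounces_below n) + card (passes_up n)"
proof -
  have "{i \<in> visits n. q (i - 1) = n - 1} = bounces_below n \<union> passes_up n"
    using visit_neighbours by (auto simp: bounces_below_def passes_up_def)
  moreover have "bounces_below n \<inter> passes_up n = {}"
    by (auto simp: bounces_below_def passes_up_def)
  ultimately show ?thesis by (simp add: card_Un_disjoint)
qed

lemma card_visits_from_above:
  "card {i \<in> visits n. q (i - 1) = n + 1} = card (bounces_above n) + card (passes_down n)"
proof -
  have "{i \<in> visits n. q (i - 1) = n + 1} = bounces_above n \<union> passes_down n"
    using visit_neighbours by (auto simp: bounces_above_def passes_down_def)
  moreover have "bounces_above n \<inter> passes_down n = {}"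
    by (auto simp: bounces_above_def passes_down_def)
  ultimately show ?thesis by (simp add: card_Un_disjoint)
qed

lemma card_visits_to_below:
  "card {i \<in> visits n. q (Suc i) = n - 1} = card (bounces_below n) + card (passes_down n)"
proof -
  have "{i \<in> visits n. q (Suc i) = n - 1} = bounces_below n \<union> passes_down n"
    using visit_neighbours by (auto simp: bounces_below_def passes_down_def)
  moreover have "bounces_below n \<inter> passes_down n = {}"
    by (auto simp: bounces_below_def passes_down_def)
  ultimately show ?thesis by (simp add: card_Un_disjoint)
qed

lemma prod_vertex_weight_visits:
  fixes n :: nat
  shows "(\<Prod>i\<in>visits (int n). vertex_weight q R T i) =
     R n ^ card (bounces_below (int n)) * (- R n) ^ card (bounces_above (int n)) *
     T n ^ (card (passes_up (int n)) + card (passes_down (int n)))"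
proof -
  let ?n = "int n"
  have partition: "visits ?n = bounces_below ?n \<union> (bounces_above ?n \<union> (passes_up ?n \<union> passes_down ?n))"
    using visit_neighbours[of _ ?n]
    by (auto simp: bounces_below_def bounces_above_def passes_up_def passes_down_def)
  have "(\<Prod>i\<in>bounces_below ?n. vertex_weight q R T i) = (\<Prod>i\<in>bounces_below ?n. R n)"
    "(\<Prod>i\<in>bounces_above ?n. vertex_weight q R T i) = (\<Prod>i\<in>bounces_above ?n. - R n)"
    "(\<Prod>i\<in>passes_up ?n. vertex_weight q R T i) = (\<Prod>i\<in>passes_up ?n. T n)"
    "(\<Prod>i\<in>passes_down ?n. vertex_weight q R T i) = (\<Prod>i\<in>passes_down ?n. T n)"
    by (auto intro!: prod.cong simp: vertex_weight_def visits_def bounces_below_def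
        bounces_above_def passes_up_def passes_down_def)
  moreover have "bounces_below ?n \<inter> (bounces_above ?n \<union> (passes_up ?n \<union> passes_down ?n)) = {}"
    "bounces_above ?n \<inter> (passes_up ?n \<union> passes_down ?n) = {}" "passes_up ?n \<inter> passes_down ?n = {}"
    by (auto simp: bounces_below_def bounces_above_def passes_up_def passes_down_def)
  ultimately show ?thesis
    unfolding partition by (simp add: prod.union_disjoint power_add mult.assoc)
qed

lemma maximal_run_end_in_down_steps:
  assumes "(a, b) \<in> maximal_runs L (\<lambda>i. n \<le> q i)" "b \<noteq> L"
  shows "b \<in> down_steps n L"
proof -
  have "b < L" "n \<le> q b" "\<not> n \<le> q (Suc b)"
    using assms by (auto simp: maximal_runs_def)
  then show ?thesis using unit_step[of b] by (auto simp: down_steps_def)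
qed

lemma maximal_run_ending_at_down_step:
  assumes start: "q 0 < n" and d: "d \<in> down_steps n L"
  obtains a where "(a, d) \<in> maximal_runs L (\<lambda>i. n \<le> q i)"
proof -
  have d: "d < L" "q d = n" "q (Suc d) = n - 1" using d by (auto simp: down_steps_def)
  define S where "S = {j. j < d \<and> q j < n}"
  have "0 \<in> S" using start d by (auto simp: S_def intro!: gr0I)
  moreover have "finite S" by (simp add: S_def)
  ultimately have last_below: "Max S \<in> S" "\<And>j. j \<in> S \<Longrightarrow> j \<le> Max S"
    using Max_in by auto
  \<comment> \<open>the run starts just after the last time before \<open>d\<close> that the walk was below \<open>n\<close>\<close>
  have "(Suc (Max S), d) \<in> maximal_runs L (\<lambda>i. n \<le> q i)"
    unfolding maximal_runs_def
  proof (clarsimp, intro conjI ballI)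
    show "Suc (Max S) \<le> d" "\<not> n \<le> q (Max S)" using last_below(1) by (auto simp: S_def)
    fix i assume i: "i \<in> {Suc (Max S)..d}"
    show "n \<le> q i"
    proof (rule ccontr)
      assume "\<not> n \<le> q i"
      then have "i \<in> S" using i d by (auto simp: S_def order.order_iff_strict)
      then show False using last_below(2) i by fastforce
    qed
  qed (use d in auto)
  then show thesis by (rule that)
qed

lemma snd_nontrunk_runs:
  assumes "q 0 < n"
  shows "snd ` {(a, b) \<in> maximal_runs L (\<lambda>i. n \<le> q i). b \<noteq> L} = down_steps n L"
proof (intro equalityI subsetI)
  fix d assume "d \<in> down_steps n L"
  moreover obtain a where "(a, d) \<in> maximal_runs L (\<lambda>i. n \<le> q i)"
    using maximal_run_ending_at_down_step[OF assms \<open>d \<in> down_steps n L\<close>] .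
  ultimately show "d \<in> snd ` {(a, b) \<in> maximal_runs L (\<lambda>i. n \<le> q i). b \<noteq> L}"
    by (force simp: down_steps_def)
qed (auto intro: maximal_run_end_in_down_steps)

lemma snd_long_nontrunk_runs:
  assumes "q 0 < n"
  shows "snd ` {(a, b) \<in> maximal_runs L (\<lambda>i. n \<le> q i). b \<noteq> L \<and> a < b} = passes_down n"
proof (intro equalityI subsetI)
  fix b assume "b \<in> snd ` {(a, b) \<in> maximal_runs L (\<lambda>i. n \<le> q i). b \<noteq> L \<and> a < b}"
  then obtain a where run: "(a, b) \<in> maximal_runs L (\<lambda>i. n \<le> q i)" "b \<noteq> L" "a < b" by auto
  have down: "b \<in> down_steps n L" using maximal_run_end_in_down_steps[OF run(1,2)] .
  have "n \<le> q (b - 1)" using run by (auto simp: maximal_runs_def)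
  moreover have "q b = q (b - 1) + 1 \<or> q b = q (b - 1) - 1"
    using unit_step[of "b - 1"] down run(3) by (auto simp: down_steps_def)
  ultimately show "b \<in> passes_down n"
    using down run(3) by (auto simp: down_steps_def passes_down_def visits_def)
next
  fix d assume pass: "d \<in> passes_down n"
  then have down: "d \<in> down_steps n L" by (auto simp: passes_down_def visits_def down_steps_def)
  obtain a where run: "(a, d) \<in> maximal_runs L (\<lambda>i. n \<le> q i)"
    using maximal_run_ending_at_down_step[OF assms down] .
  have "a \<noteq> d" using run pass by (auto simp: maximal_runs_def passes_down_def visits_def)
  with run down show "d \<in> snd ` {(a, b) \<in> maximal_runs L (\<lambda>i. n \<le> q i). b \<noteq> L \<and> a < b}"
    by (force simp: maximal_runs_def down_steps_def)
qed

lemma card_nontrunk_runs: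
  "q 0 < n \<Longrightarrow> card {(a, b) \<in> maximal_runs L (\<lambda>i. n \<le> q i). b \<noteq> L} = card (down_steps n L)"
  by (subst snd_nontrunk_runs[symmetric], assumption)
     (auto intro!: card_image[symmetric] inj_on_subset[OF inj_on_snd_maximal_runs])

lemma card_long_nontrunk_runs:
  "q 0 < n \<Longrightarrow> card {(a, b) \<in> maximal_runs L (\<lambda>i. n \<le> q i). b \<noteq> L \<and> a < b} = card (passes_down n)"
  by (subst snd_long_nontrunk_runs[symmetric], assumption)
     (auto intro!: card_image[symmetric] inj_on_subset[OF inj_on_snd_maximal_runs])

end

locale crossing_walk = unit_step_walk +
  fixes M :: nat
  assumes start: "q 0 = -1" and finish: "q L = int M + 1"
    and interior: "0 < i \<Longrightarrow> i < L \<Longrightarrow> 0 \<le> q i \<and> q i \<le> int M"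
begin

lemma down_steps_top: "down_steps (int M + 1) L = {}"
proof -
  have "q i \<noteq> int M + 1" if "i < L" for i
    using interior[of i] start that by (cases "i = 0") auto
  then show ?thesis by (auto simp: down_steps_def)
qed

lemma Suc_image_up_steps:
  assumes "0 \<le> n" "n \<le> int M"
  shows "Suc ` up_steps n L = {i \<in> visits n. q (i - 1) = n - 1}"
proof (intro equalityI subsetI)
  fix i assume "i \<in> Suc ` up_steps n L"
  then obtain j where j: "i = Suc j" "j < L" "q j = n - 1" "q (Suc j) = n"
    by (auto simp: up_steps_def)
  moreover have "Suc j \<noteq> L" using j(4) finish assms by auto
  ultimately show "i \<in> {i \<in> visits n. q (i - 1) = n - 1}" by (auto simp: visits_def)
next
  fix i assume "i \<in> {i \<in> visits n. q (i - 1) = n - 1}"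
  then have "i - 1 \<in> up_steps n L" "i = Suc (i - 1)" by (auto simp: up_steps_def visits_def)
  then show "i \<in> Suc ` up_steps n L" by blast
qed

lemma Suc_image_down_steps_above:
  assumes "0 \<le> n" "n \<le> int M"
  shows "Suc ` down_steps (n + 1) L = {i \<in> visits n. q (i - 1) = n + 1}"
proof (intro equalityI subsetI)
  fix i assume "i \<in> Suc ` down_steps (n + 1) L"
  then obtain j where j: "i = Suc j" "j < L" "q j = n + 1" "q (Suc j) = n"
    by (auto simp: down_steps_def)
  moreover have "Suc j \<noteq> L" using j(4) finish assms by auto
  ultimately show "i \<in> {i \<in> visits n. q (i - 1) = n + 1}" by (auto simp: visits_def)
next
  fix i assume "i \<in> {i \<in> visits n. q (i - 1) = n + 1}"
  then have "i - 1 \<in> down_steps (n + 1) L" "i = Suc (i - 1)"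
    by (auto simp: down_steps_def visits_def)
  then show "i \<in> Suc ` down_steps (n + 1) L" by blast
qed

lemma down_steps_eq_departures:
  assumes "0 \<le> n"
  shows "down_steps n L = {i \<in> visits n. q (Suc i) = n - 1}"
  using assms start by (auto simp: down_steps_def visits_def intro!: gr0I)

lemma card_down_steps:
  "0 \<le> n \<Longrightarrow> card (down_steps n L) = card (bounces_below n) + card (passes_down n)"
  by (simp add: down_steps_eq_departures card_visits_to_below)

lemma card_down_steps_above:
  assumes "0 \<le> n" "n \<le> int M"
  shows "card (down_steps (n + 1) L) = card (bounces_above n) + card (passes_down n)"
proof -
  have "card (down_steps (n + 1) L) = card (Suc ` down_steps (n + 1) L)"
    by (simp add: card_image)
  also have "\<dots> = card {i \<in> visits n. q (i - 1) = n + 1}"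
    by (simp only: Suc_image_down_steps_above[OF assms])
  also have "\<dots> = card (bounces_above n) + card (passes_down n)"
    by (rule card_visits_from_above)
  finally show ?thesis .
qed

lemma card_passes_up:
  assumes "0 \<le> n" "n \<le> int M"
  shows "card (passes_up n) = card (passes_down n) + 1"
proof -
  \<comment> \<open>the walk runs from below level \<open>n\<close> to above it, so it crosses upwards once more\<close>
  have "card (down_steps n L) + 1 = card (up_steps n L)"
    using card_up_steps[of L n] start finish assms by simp
  also have "\<dots> = card (Suc ` up_steps n L)"
    by (simp add: card_image)
  also have "\<dots> = card {i \<in> visits n. q (i - 1) = n - 1}"
    by (simp only: Suc_image_up_steps[OF assms])
  also have "\<dots> = card (bounces_below n) + card (passes_up n)"
    by (rule card_visits_from_below)
  finally show ?thesis using card_down_steps[OF assms(1)] by simp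
qed

lemma prod_vertex_weight_levels:
  "(\<Prod>i\<in>{1..<L}. vertex_weight q R T i) =
   (\<Prod>n\<in>{0..M}. (- R n) ^ (card (down_steps (int n + 1) L) - card (passes_down (int n)))
      * R n ^ (card (down_steps (int n) L) - card (passes_down (int n)))
      * T n ^ (2 * card (passes_down (int n)) + 1))"
proof -
  have "(\<Prod>i\<in>{1..<L}. vertex_weight q R T i) =
        (\<Prod>n\<in>{0..M}. \<Prod>i\<in>{i \<in> {1..<L}. nat (q i) = n}. vertex_weight q R T i)"
    by (rule prod.group[symmetric]) (use interior in \<open>auto simp: nat_le_iff\<close>)
  also have "\<dots> = (\<Prod>n\<in>{0..M}. \<Prod>i\<in>visits (int n). vertex_weight q R T i)"
    using interior by (intro prod.cong refl arg_cong2[where f = prod]) (force simp: visits_def)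
  also have "\<dots> = (\<Prod>n\<in>{0..M}. (- R n) ^ (card (down_steps (int n + 1) L) - card (passes_down (int n)))
      * R n ^ (card (down_steps (int n) L) - card (passes_down (int n)))
      * T n ^ (2 * card (passes_down (int n)) + 1))"
  proof (intro prod.cong refl)
    fix n assume "n \<in> {0..M}"
    then show "(\<Prod>i\<in>visits (int n). vertex_weight q R T i) =
      (- R n) ^ (card (down_steps (int n + 1) L) - card (passes_down (int n)))
      * R n ^ (card (down_steps (int n) L) - card (passes_down (int n)))
      * T n ^ (2 * card (passes_down (int n)) + 1)"
      using card_down_steps[of "int n"] card_down_steps_above[of "int n"] card_passes_up[of "int n"]
      by (simp add: prod_vertex_weight_visits mult_2 mult_ac)
  qed
  finally show ?thesis .
qed

end

lemma depths_ok_inj_on: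
  assumes "depths_ok M z"
  shows "inj_on z {-1..int M + 1}"
  using assms by (auto intro!: strict_mono_on_imp_inj_on strict_mono_onI simp: depths_ok_def)

lemma depth_index_eq:
  assumes "depths_ok M z" "j \<in> {-1..int M + 1}"
  shows "depth_index M z (z j) = j"
  unfolding depth_index_def
  using assms inj_onD[OF depths_ok_inj_on[OF assms(1)]] by (intro the_equality) auto

definition depth_walk :: "nat \<Rightarrow> (int \<Rightarrow> real) \<Rightarrow> real list \<Rightarrow> nat \<Rightarrow> int" where
  "depth_walk M z p i = depth_index M z (p ! i)"

lemma tss_nth_eq_depth_walk:
  assumes "depths_ok M z" "tss M z p" "i < length p"
  shows "p ! i = z (depth_walk M z p i)" "depth_walk M z p i \<in> {-1..int M + 1}"
proof -
  obtain j where j: "p ! i = z j" "j \<in> {-1..int M + 1}"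
  proof (cases "0 < i \<and> i < length p - 1")
    case True
    then obtain j where "0 \<le> j" "j \<le> int M" "p ! i = z j"
      using assms(2) by (auto simp: tss_def Suc_le_eq)
    then show thesis by (intro that[of j]) auto
  next
    case False
    then have "i = 0 \<or> i = length p - 1" using assms(3) by auto
    then show thesis
      using assms(2) by (elim disjE; intro that) (auto simp: tss_def)
  qed
  moreover have "depth_walk M z p i = j"
    using j depth_index_eq[OF assms(1) j(2)] by (simp add: depth_walk_def)
  ultimately show "p ! i = z (depth_walk M z p i)" "depth_walk M z p i \<in> {-1..int M + 1}"
    by simp_all
qed

lemma tss_depth_walk_interior:
  assumes "depths_ok M z" "tss M z p" "0 < i" "i < length p - 1"
  shows "depth_walk M z p i \<in> {0..int M}"
proof -
  obtain j where j: "0 \<le> j" "j \<le> int M" "p ! i = z j"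
    using assms(2-4) by (auto simp: tss_def Suc_le_eq)
  then show ?thesis
    using depth_index_eq[OF assms(1), of j] by (simp add: depth_walk_def)
qed

lemma depth_walk_eq_iff:
  assumes "depths_ok M z" "tss M z p" "i < length p" "j \<in> {-1..int M + 1}"
  shows "p ! i = z j \<longleftrightarrow> depth_walk M z p i = j"
  using tss_nth_eq_depth_walk[OF assms(1-3)] inj_on_eq_iff[OF depths_ok_inj_on[OF assms(1)]] assms(4)
  by metis

lemma crossing_walk_depth_walk:
  assumes "depths_ok M z" "tss M z p"
  shows "crossing_walk (depth_walk M z p) (length p - 1) M"
proof unfold_locales
  let ?q = "depth_walk M z p"
  have ne: "p \<noteq> []" using assms(2) by (simp add: tss_def)
  show "?q 0 = -1" "?q (length p - 1) = int M + 1"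
    using assms(2) depth_index_eq[OF assms(1)] by (auto simp: tss_def depth_walk_def)
  show "0 \<le> ?q i \<and> ?q i \<le> int M" if "0 < i" "i < length p - 1" for i
    using tss_depth_walk_interior[OF assms that] by simp
  fix i assume "i < length p - 1"
  then have i: "i < length p" "Suc i < length p" by auto
  obtain j where j: "-1 \<le> j" "j \<le> int M" "{p ! i, p ! Suc i} = {z j, z (j + 1)}"
    using assms(2) \<open>i < length p - 1\<close> by (auto simp: tss_def)
  have ranges: "{?q i, ?q (Suc i)} \<subseteq> {-1..int M + 1}" "{j, j + 1} \<subseteq> {-1..int M + 1}"
    using tss_nth_eq_depth_walk(2)[OF assms i(1)] tss_nth_eq_depth_walk(2)[OF assms i(2)] j(1,2)
    by auto
  have "z ` {?q i, ?q (Suc i)} = z ` {j, j + 1}"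
    using j(3) tss_nth_eq_depth_walk(1)[OF assms i(1)] tss_nth_eq_depth_walk(1)[OF assms i(2)]
    by simp
  then have "{?q i, ?q (Suc i)} = {j, j + 1}"
    using inj_on_image_eq_iff[OF depths_ok_inj_on[OF assms(1)] ranges] by simp
  then show "?q (Suc i) = ?q i + 1 \<or> ?q (Suc i) = ?q i - 1"
    by (auto simp: doubleton_eq_iff)
qed

context
  fixes M :: nat and z :: "int \<Rightarrow> real" and p :: "real list"
  assumes depths: "depths_ok M z" and seq: "tss M z p"
begin

interpretation walk: crossing_walk "depth_walk M z p" "length p - 1" M
  using depths seq by (rule crossing_walk_depth_walk)

lemma weight_eq_prod_vertex_weight:
  "weight M z R p = (\<Prod>i\<in>{1..<length p - 1}. vertex_weight (depth_walk M z p) R (trans_coeff R) i)"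
  unfolding weight_def
proof (intro prod.cong refl)
  fix i assume i: "i \<in> {1..<length p - 1}"
  let ?q = "depth_walk M z p"
  have qi: "?q i \<in> {0..int M}" using tss_depth_walk_interior[OF depths seq, of i] i by simp
  have "p ! (i - 1) = z (?q i - 1) \<longleftrightarrow> ?q (i - 1) = ?q i - 1"
    "p ! (i - 1) = z (?q i + 1) \<longleftrightarrow> ?q (i - 1) = ?q i + 1"
    "p ! (Suc i) = z (?q i - 1) \<longleftrightarrow> ?q (Suc i) = ?q i - 1"
    "p ! (Suc i) = z (?q i + 1) \<longleftrightarrow> ?q (Suc i) = ?q i + 1"
    using i qi by (auto intro!: depth_walk_eq_iff[OF depths seq])
  then show "loc_weight M z R p i = vertex_weight ?q R (trans_coeff R) i"
    unfolding loc_weight_def vertex_weight_def Let_def depth_walk_def[symmetric] by simp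
qed

lemma runs_eq_maximal_runs:
  "runs M z p n = maximal_runs (length p - 1) (\<lambda>i. int n \<le> depth_walk M z p i)"
proof -
  have "in_layer M z p n i \<longleftrightarrow> int n \<le> depth_walk M z p i" if "i \<le> length p - 1" for i
  proof -
    have i: "i < length p" using that seq by (cases p) (auto simp: tss_def)
    show ?thesis
      unfolding in_layer_def
      using tss_nth_eq_depth_walk[OF depths seq i] depth_walk_eq_iff[OF depths seq i]
      by (smt (verit) atLeastAtMost_iff of_nat_0_le_iff)
  qed
  then show ?thesis
    unfolding runs_def maximal_runs_def[symmetric] by (rule maximal_runs_cong)
qed

lemma kappa_eq_card_down_steps:
  "kappa M z p n = card (walk.down_steps (int n) (length p - 1))"
  unfolding kappa_def runs_eq_maximal_runs using walk.card_nontrunk_runs walk.start by simp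

lemma beta_eq_card_passes_down:
  "beta M z p n = card (walk.passes_down (int n))"
  unfolding beta_def runs_eq_maximal_runs using walk.card_long_nontrunk_runs walk.start by simp

lemma kappa_tilde_eq_card_down_steps:
  "n \<le> M \<Longrightarrow> kappa_tilde M z p n = card (walk.down_steps (int n + 1) (length p - 1))"
  using kappa_eq_card_down_steps[of "Suc n"] walk.down_steps_top
  by (auto simp: kappa_tilde_def add.commute)

end

theorem lemma3:
  fixes M :: nat and z :: "int \<Rightarrow> real" and R :: "nat \<Rightarrow> real" and p :: "real list"
  assumes "M \<ge> 1"
    and "depths_ok M z"
    and "medium M R"
    and "tss M z p"
  shows "weight M z R p =
    (\<Prod>n\<in>{0..M}.
        (- R n) ^ (kappa_tilde M z p n - beta M z p n)
      * (R n) ^ (kappa M z p n - beta M z p n)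
      * (trans_coeff R n) ^ (2 * beta M z p n + 1))"
proof -
  interpret walk: crossing_walk "depth_walk M z p" "length p - 1" M
    using assms(2,4) by (rule crossing_walk_depth_walk)
  show ?thesis
    unfolding weight_eq_prod_vertex_weight[OF assms(2,4)] walk.prod_vertex_weight_levels
    by (intro prod.cong refl)
       (simp add: kappa_eq_card_down_steps[OF assms(2,4)] beta_eq_card_passes_down[OF assms(2,4)]
         kappa_tilde_eq_card_down_steps[OF assms(2,4)])
qed

end
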